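(* Let $X$ be a uniform space equipped with a uniformly continuous and expansive action of a group $\Gamma$, and let $f \colon X \to X$ be a uniformly continuous and $\Gamma$-equivariant map. Let $Y$ be a compact subset of $X$. Suppose that there exists a net $(Z_i)_{i \in I}$ of $\Gamma$-invariant subsets of $X$ which converges to $Y$ in the Hausdorff-Bourbaki topology on $\mathcal{P}(X)$, such that for every $i \in I$ one has $f(Z_i) \subset Z_i$ and the restriction map $f\vert_{Z_i} \colon Z_i \to Z_i$ is surjunctive. Then $Y$ is $\Gamma$-invariant, $f(Y) \subset Y$, and the restriction map $f\vert_Y \colon Y \to Y$ is surjunctive.
   Context: A map $g \colon S \to S$ from a set to itself is surjunctive if it is surjective or not injective. For a binary relation $V \subset X \times X$ and $A \subset X$, $V[A] = \{x \in X : (x,a) \in V \text{ for some } a \in A\}$. An action of $\Gamma$ on a uniform space $X$ is uniformly continuous if each map $x \mapsto \gamma x$ is uniformly continuous; it is expansive if there is an entourage $W_0$ of $X$ such that for any two distinct $x,y \in X$ there is $\gamma \in \Gamma$ with $(\gamma x,\gamma y) \notin W_0$. The Hausdorff-Bourbaki uniform structure on the set $\mathcal{P}(X)$ of all subsets of $X$ is the uniform structure having as a base the sets $\widehat{V} = \{(A,B) \in \mathcal{P}(X)\times\mathcal{P}(X) : B \subset V[A] \text{ and } A \subset V[B]\}$, $V$ an entourage of $X$; the Hausdorff-Bourbaki topology is its associated topology. *)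

theory Defs
  imports "HOL-Analysis.Analysis"
begin

definition entourage :: "('a::uniform_space \<times> 'a) set \<Rightarrow> bool" where
  "entourage V \<longleftrightarrow> eventually (\<lambda>p. p \<in> V) uniformity"

definition rel_image :: "('a \<times> 'a) set \<Rightarrow> 'a set \<Rightarrow> 'a set" where
  "rel_image V A = {x. \<exists>a\<in>A. (x, a) \<in> V}"

definition hb_entourage :: "('a \<times> 'a) set \<Rightarrow> ('a set \<times> 'a set) set" where
  "hb_entourage V = {(A, B). B \<subseteq> rel_image V A \<and> A \<subseteq> rel_image V B}"

definition hb_net_converges :: "('i::preorder \<Rightarrow> 'a::uniform_space set) \<Rightarrow> 'a set \<Rightarrow> bool" where
  "hb_net_converges Z Y \<longleftrightarrow>
     (\<forall>V. entourage V \<longrightarrow> (\<exists>i0. \<forall>i. i0 \<le> i \<longrightarrow> (Z i, Y) \<in> hb_entourage V))"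

definition directed_type :: "'i::preorder itself \<Rightarrow> bool" where
  "directed_type _ \<longleftrightarrow> (\<forall>a b::'i. \<exists>c. a \<le> c \<and> b \<le> c)"

definition group_action :: "('g::group_add \<Rightarrow> 'a \<Rightarrow> 'a) \<Rightarrow> bool" where
  "group_action act \<longleftrightarrow> (\<forall>x. act 0 x = x) \<and> (\<forall>g h x. act (g + h) x = act g (act h x))"

definition expansive_action :: "('g \<Rightarrow> 'a::uniform_space \<Rightarrow> 'a) \<Rightarrow> bool" where
  "expansive_action act \<longleftrightarrow>
     (\<exists>W0. entourage W0 \<and> (\<forall>x y. x \<noteq> y \<longrightarrow> (\<exists>g. (act g x, act g y) \<notin> W0)))"

definition invariant_set :: "('g \<Rightarrow> 'a \<Rightarrow> 'a) \<Rightarrow> 'a set \<Rightarrow> bool" where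
  "invariant_set act Z \<longleftrightarrow> (\<forall>g. \<forall>x\<in>Z. act g x \<in> Z)"

definition equivariant :: "('g \<Rightarrow> 'a \<Rightarrow> 'a) \<Rightarrow> ('a \<Rightarrow> 'a) \<Rightarrow> bool" where
  "equivariant act f \<longleftrightarrow> (\<forall>g x. f (act g x) = act g (f x))"

text \<open>The restriction of f to S (assumed to map S into S) is surjunctive:
  surjective onto S or not injective on S.\<close>
definition surjunctive_on :: "'a set \<Rightarrow> ('a \<Rightarrow> 'a) \<Rightarrow> bool" where
  "surjunctive_on S f \<longleftrightarrow> f ` S = S \<or> \<not> inj_on f S"

end

theory Submission
  imports Defs
begin

text \<open>Expansiveness makes the uniformity separated, so a point that is uniformly close to
  the compact set \<open>Y\<close> lies in \<open>Y\<close>, and a continuous injection on \<open>Y\<close> is uniformly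
  injective. With uniform continuity this passes the inclusions \<open>h(Z\<^sub>i) \<subseteq> Z\<^sub>i\<close>
  (for \<open>f\<close> and for the translations) to the limit \<open>Y\<close>. If \<open>f\<close> is injective on \<open>Y\<close>,
  then for late \<open>i\<close> any two points of \<open>Z\<^sub>i\<close> with the same image are uniformly close;
  translating them by \<open>\<Gamma>\<close> keeps them in \<open>Z\<^sub>i\<close> with equal images, so expansiveness forces
  them to coincide. Hence \<open>f\<close> is eventually injective, thus surjective, on \<open>Z\<^sub>i\<close>, and
  surjectivity passes to the compact limit \<open>Y\<close>.\<close>

definition separated_uniformity :: "'a::uniform_space itself \<Rightarrow> bool" where
  "separated_uniformity _ \<longleftrightarrow> (\<forall>p q::'a. p \<noteq> q \<longrightarrow> (\<exists>V. entourage V \<and> (p, q) \<notin> V))"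

lemma entourage_Int: "entourage U \<Longrightarrow> entourage V \<Longrightarrow> entourage (U \<inter> V)"
  unfolding entourage_def by (auto elim: eventually_elim2)

lemma entourage_refl: "entourage V \<Longrightarrow> (x, x) \<in> V"
  unfolding entourage_def using uniformity_refl[of "\<lambda>p. p \<in> V"] by simp

lemma entourage_cube_root:
  fixes V :: "('a::uniform_space \<times> 'a) set"
  assumes "entourage V"
  obtains E where "entourage E" "\<And>a b. (a, b) \<in> E \<Longrightarrow> (b, a) \<in> E"
    "\<And>a b c d. (a, b) \<in> E \<Longrightarrow> (b, c) \<in> E \<Longrightarrow> (c, d) \<in> E \<Longrightarrow> (a, d) \<in> V"
proof -
  obtain D1 where D1: "eventually D1 uniformity" "\<And>x y z. D1 (x, y) \<Longrightarrow> D1 (y, z) \<Longrightarrow> (x, z) \<in> V"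
    using uniformity_transE[of "\<lambda>p. p \<in> V"] assms unfolding entourage_def by blast
  obtain D2 where D2: "eventually D2 uniformity" "\<And>x y z. D2 (x, y) \<Longrightarrow> D2 (y, z) \<Longrightarrow> D1 (x, z)"
    using uniformity_transE[OF D1(1)] by blast
  define E where "E = {p. D2 p \<and> D2 (snd p, fst p)}"
  have "entourage E"
    unfolding entourage_def E_def
    using eventually_conj[OF D2(1) uniformity_sym[OF D2(1)]] by (simp add: case_prod_beta)
  moreover have "(a, d) \<in> V" if "(a, b) \<in> E" "(b, c) \<in> E" "(c, d) \<in> E" for a b c d
  proof -
    have "D2 (a, b)" "D2 (b, c)" "D2 (c, d)" using that unfolding E_def by auto
    then have "D1 (a, c)" "D1 (c, d)"
      using D2(2) uniformity_refl[OF D2(1)] by blast+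
    then show ?thesis using D1(2) by blast
  qed
  moreover have "(b, a) \<in> E" if "(a, b) \<in> E" for a b
    using that unfolding E_def by auto
  ultimately show thesis using that by blast
qed

lemma entourage_neighbourhood:
  fixes E :: "('a::uniform_space \<times> 'a) set"
  assumes "entourage E"
  obtains N where "open N" "p \<in> N" "\<And>u. u \<in> N \<Longrightarrow> (p, u) \<in> E"
proof -
  have "eventually (\<lambda>u. (p, u) \<in> E) (nhds p)"
    unfolding eventually_nhds_uniformity using assms unfolding entourage_def
    by (auto elim: eventually_mono)
  then show thesis using that unfolding eventually_nhds by blast
qed

lemma uniformly_continuous_entourage:
  assumes "uniformly_continuous_on UNIV h" "entourage V"
  obtains U where "entourage U" "\<And>a b. (a, b) \<in> U \<Longrightarrow> (h a, h b) \<in> V"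
proof
  have "eventually (\<lambda>(x, y). x \<in> UNIV \<longrightarrow> y \<in> UNIV \<longrightarrow> (h x, h y) \<in> V) uniformity"
    using uniformly_continuous_onD[OF assms(1), of "\<lambda>p. p \<in> V"] assms(2)
    unfolding entourage_def by simp
  then show "entourage {(a, b). (h a, h b) \<in> V}"
    unfolding entourage_def by (simp add: case_prod_unfold)
qed auto

lemma diagonal_in_interior_entourage:
  fixes W :: "('a::uniform_space \<times> 'a) set"
  assumes "entourage W"
  shows "(x, x) \<in> interior W"
proof -
  obtain E where E: "entourage E" "\<And>a b. (a, b) \<in> E \<Longrightarrow> (b, a) \<in> E"
    "\<And>a b c d. (a, b) \<in> E \<Longrightarrow> (b, c) \<in> E \<Longrightarrow> (c, d) \<in> E \<Longrightarrow> (a, d) \<in> W"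
    by (fact entourage_cube_root[OF assms])
  obtain N where N: "open N" "x \<in> N" "\<And>u. u \<in> N \<Longrightarrow> (x, u) \<in> E"
    by (fact entourage_neighbourhood[OF E(1)])
  have "(u, v) \<in> W" if "u \<in> N" "v \<in> N" for u v
    using E(3)[OF E(2)[OF N(3)[OF that(1)]] N(3)[OF that(2)] entourage_refl[OF E(1)]] .
  then have "N \<times> N \<subseteq> W" by auto
  then show ?thesis using N by (intro interiorI[of "N \<times> N"]) (auto intro: open_Times)
qed

lemma compact_meets_all_entourages_imp_diagonal:
  fixes K :: "('a::uniform_space \<times> 'a) set"
  assumes sep: "separated_uniformity TYPE('a)"
    and "compact K"
    and meets: "\<And>T. entourage T \<Longrightarrow> K \<inter> T \<noteq> {}"
  shows "\<exists>x. (x, x) \<in> K"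
proof (rule ccontr)
  assume no_diagonal: "\<nexists>x. (x, x) \<in> K"
  have "\<exists>E N1 N2. entourage E \<and> open N1 \<and> open N2 \<and> k \<in> N1 \<times> N2 \<and> (N1 \<times> N2) \<inter> E = {}"
    if "k \<in> K" for k
  proof -
    obtain p q where k: "k = (p, q)" by fastforce
    with no_diagonal that have "p \<noteq> q" by auto
    then obtain V where V: "entourage V" "(p, q) \<notin> V"
      using sep unfolding separated_uniformity_def by blast
    obtain E where E: "entourage E" "\<And>a b. (a, b) \<in> E \<Longrightarrow> (b, a) \<in> E"
      "\<And>a b c d. (a, b) \<in> E \<Longrightarrow> (b, c) \<in> E \<Longrightarrow> (c, d) \<in> E \<Longrightarrow> (a, d) \<in> V"
      by (fact entourage_cube_root[OF V(1)])
    obtain N1 where N1: "open N1" "p \<in> N1" "\<And>u. u \<in> N1 \<Longrightarrow> (p, u) \<in> E"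
      by (fact entourage_neighbourhood[OF E(1)])
    obtain N2 where N2: "open N2" "q \<in> N2" "\<And>u. u \<in> N2 \<Longrightarrow> (q, u) \<in> E"
      by (fact entourage_neighbourhood[OF E(1)])
    have "(u, v) \<notin> E" if "u \<in> N1" "v \<in> N2" for u v
      using E(3)[OF N1(3)[OF that(1)] _ E(2)[OF N2(3)[OF that(2)]]] V(2) by blast
    then have "(N1 \<times> N2) \<inter> E = {}" by auto
    then show ?thesis using E(1) N1 N2 k by blast
  qed
  then obtain E N1 N2 where sepK: "\<And>k. k \<in> K \<Longrightarrow> entourage (E k) \<and> open (N1 k) \<and> open (N2 k) \<and>
      k \<in> N1 k \<times> N2 k \<and> (N1 k \<times> N2 k) \<inter> E k = {}"
    by metis
  obtain D where D: "D \<subseteq> K" "finite D" "K \<subseteq> (\<Union>k\<in>D. N1 k \<times> N2 k)"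
    using compactE_image[OF \<open>compact K\<close>, of K "\<lambda>k. N1 k \<times> N2 k"] sepK
    by (blast intro: open_Times)
  have "eventually (\<lambda>p. \<forall>k\<in>D. p \<in> E k) uniformity"
    using D sepK unfolding entourage_def by (subst eventually_ball_finite_distrib) auto
  then have "entourage (\<Inter>k\<in>D. E k)" unfolding entourage_def by simp
  then obtain k where k: "k \<in> K" "k \<in> (\<Inter>d\<in>D. E d)" using meets by blast
  then obtain d where "d \<in> D" "k \<in> N1 d \<times> N2 d" using D(3) by blast
  moreover have "k \<in> E d" using k(2) \<open>d \<in> D\<close> by blast
  moreover have "(N1 d \<times> N2 d) \<inter> E d = {}"
    using sepK D(1) \<open>d \<in> D\<close> by blast
  ultimately show False by blast
qed

lemma mem_compact_if_entourage_close:
  fixes A :: "'a::uniform_space set"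
  assumes sep: "separated_uniformity TYPE('a)"
    and "compact A" and close: "\<And>V. entourage V \<Longrightarrow> \<exists>a\<in>A. (p, a) \<in> V"
  shows "p \<in> A"
proof -
  have "compact ({p} \<times> A)" using \<open>compact A\<close> by (intro compact_Times) auto
  then obtain x where "(x, x) \<in> {p} \<times> A"
    using compact_meets_all_entourages_imp_diagonal[OF sep] close by fastforce
  then show ?thesis by auto
qed

text \<open>Proof by contradiction: the images of the pairs of \<open>Y \<times> Y\<close> outside \<open>interior W\<close>
  form a compact set meeting every entourage, so it contains a diagonal point \<open>(f a, f b)\<close>.\<close>

lemma inj_on_compact_imp_uniformly_injective:
  fixes f :: "'a::uniform_space \<Rightarrow> 'b::uniform_space"
  assumes sep: "separated_uniformity TYPE('b)"
    and "compact Y" "continuous_on Y f" "inj_on f Y" "entourage W"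
  shows "\<exists>T. entourage T \<and> (\<forall>y\<in>Y. \<forall>y'\<in>Y. (f y, f y') \<in> T \<longrightarrow> (y, y') \<in> W)"
proof (rule ccontr)
  assume not_uniform: "\<not> ?thesis"
  define F where "F = (\<lambda>p. (f (fst p), f (snd p)))"
  define K where "K = F ` (Y \<times> Y - interior W)"
  have "continuous_on (Y \<times> Y) F"
    unfolding F_def
    by (intro continuous_on_Pair continuous_on_compose2[OF \<open>continuous_on Y f\<close>]
        continuous_on_fst continuous_on_snd continuous_on_id) auto
  then have "continuous_on (Y \<times> Y - interior W) F"
    by (rule continuous_on_subset) auto
  moreover have "compact (Y \<times> Y - interior W)"
    using \<open>compact Y\<close> by (intro compact_diff compact_Times) auto
  ultimately have "compact K"
    unfolding K_def by (rule compact_continuous_image)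
  moreover have "K \<inter> T \<noteq> {}" if T: "entourage T" for T
  proof -
    obtain y y' where "y \<in> Y" "y' \<in> Y" "(f y, f y') \<in> T" "(y, y') \<notin> W"
      using not_uniform T by blast
    then have "(f y, f y') \<in> K"
      unfolding K_def F_def using interior_subset
      by (intro image_eqI[of _ _ "(y, y')"]) auto
    then show ?thesis using \<open>(f y, f y') \<in> T\<close> by blast
  qed
  ultimately obtain x where "(x, x) \<in> K"
    using compact_meets_all_entourages_imp_diagonal[OF sep] by blast
  then obtain a b where "a \<in> Y" "b \<in> Y" "(a, b) \<notin> interior W" "f a = f b"
    unfolding K_def F_def by auto
  then show False
    using \<open>inj_on f Y\<close> diagonal_in_interior_entourage[OF \<open>entourage W\<close>] by (auto dest: inj_onD)
qed

lemma expansive_action_imp_separated: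
  fixes act :: "'g \<Rightarrow> 'a::uniform_space \<Rightarrow> 'a"
  assumes "expansive_action act" "\<forall>g. uniformly_continuous_on UNIV (act g)"
  shows "separated_uniformity TYPE('a)"
  unfolding separated_uniformity_def
proof (intro allI impI)
  fix p q :: 'a assume "p \<noteq> q"
  then obtain W0 g where W0: "entourage W0" "(act g p, act g q) \<notin> W0"
    using assms(1) unfolding expansive_action_def by blast
  obtain U where "entourage U" "\<And>a b. (a, b) \<in> U \<Longrightarrow> (act g a, act g b) \<in> W0"
    using uniformly_continuous_entourage[OF spec[OF assms(2), of g] W0(1)] by blast
  then show "\<exists>V. entourage V \<and> (p, q) \<notin> V" using W0(2) by blast
qed

lemma expansive_action_inj_on_invariant:
  fixes act :: "'g \<Rightarrow> 'a \<Rightarrow> 'a"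
  assumes W0: "\<forall>x y. x \<noteq> y \<longrightarrow> (\<exists>g. (act g x, act g y) \<notin> W0)"
    and "equivariant act f" "invariant_set act S"
    and close: "\<forall>w\<in>S. \<forall>w'\<in>S. f w = f w' \<longrightarrow> (w, w') \<in> W0"
  shows "inj_on f S"
proof (rule inj_onI, rule ccontr)
  fix z z' assume "z \<in> S" "z' \<in> S" "f z = f z'" "z \<noteq> z'"
  then obtain g where "(act g z, act g z') \<notin> W0" using W0 by blast
  moreover have "act g z \<in> S" "act g z' \<in> S"
    using \<open>invariant_set act S\<close> \<open>z \<in> S\<close> \<open>z' \<in> S\<close> unfolding invariant_set_def by auto
  moreover have "f (act g z) = f (act g z')"
    using \<open>equivariant act f\<close> \<open>f z = f z'\<close> unfolding equivariant_def by metis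
  ultimately show False using close by blast
qed

lemma hb_net_convergesE:
  assumes "hb_net_converges Z Y" "entourage V"
  obtains i0 where "\<And>i y. i0 \<le> i \<Longrightarrow> y \<in> Y \<Longrightarrow> \<exists>z\<in>Z i. (y, z) \<in> V"
    "\<And>i z. i0 \<le> i \<Longrightarrow> z \<in> Z i \<Longrightarrow> \<exists>y\<in>Y. (z, y) \<in> V"
  using assms unfolding hb_net_converges_def hb_entourage_def rel_image_def
  by (simp add: subset_iff) blast

lemma hb_limit_maps_into:
  fixes Z :: "'i::preorder \<Rightarrow> 'a::uniform_space set" and h :: "'a \<Rightarrow> 'a"
  assumes sep: "separated_uniformity TYPE('a)"
    and "compact Y" "hb_net_converges Z Y" "uniformly_continuous_on UNIV h"
    and maps: "\<And>i x. x \<in> Z i \<Longrightarrow> h x \<in> Z i"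
  shows "h ` Y \<subseteq> Y"
proof (rule image_subsetI)
  fix y assume "y \<in> Y"
  show "h y \<in> Y"
  proof (rule mem_compact_if_entourage_close[OF sep \<open>compact Y\<close>])
    fix V :: "('a \<times> 'a) set" assume "entourage V"
    obtain E where E: "entourage E" "\<And>a b. (a, b) \<in> E \<Longrightarrow> (b, a) \<in> E"
      "\<And>a b c d. (a, b) \<in> E \<Longrightarrow> (b, c) \<in> E \<Longrightarrow> (c, d) \<in> E \<Longrightarrow> (a, d) \<in> V"
      by (fact entourage_cube_root[OF \<open>entourage V\<close>])
    obtain U where U: "entourage U" "\<And>a b. (a, b) \<in> U \<Longrightarrow> (h a, h b) \<in> E"
      by (fact uniformly_continuous_entourage[OF assms(4) E(1)])
    obtain i0 where i0: "\<And>i y. i0 \<le> i \<Longrightarrow> y \<in> Y \<Longrightarrow> \<exists>z\<in>Z i. (y, z) \<in> U \<inter> E"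
      "\<And>i z. i0 \<le> i \<Longrightarrow> z \<in> Z i \<Longrightarrow> \<exists>y\<in>Y. (z, y) \<in> U \<inter> E"
      by (fact hb_net_convergesE[OF assms(3) entourage_Int[OF U(1) E(1)]])
    obtain z where "z \<in> Z i0" "(y, z) \<in> U" using i0(1)[OF order_refl \<open>y \<in> Y\<close>] by blast
    obtain y' where "y' \<in> Y" "(h z, y') \<in> E"
      using i0(2)[OF order_refl maps[OF \<open>z \<in> Z i0\<close>]] by blast
    have "(h y, y') \<in> V"
      using E(3)[OF U(2)[OF \<open>(y, z) \<in> U\<close>] \<open>(h z, y') \<in> E\<close> entourage_refl[OF E(1)]] .
    then show "\<exists>a\<in>Y. (h y, a) \<in> V" using \<open>y' \<in> Y\<close> by blast
  qed
qed

lemma hb_limit_eventually_uniformly_injective: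
  fixes Z :: "'i::preorder \<Rightarrow> 'a::uniform_space set" and f :: "'a \<Rightarrow> 'a"
  assumes sep: "separated_uniformity TYPE('a)"
    and "compact Y" "hb_net_converges Z Y" "uniformly_continuous_on UNIV f" "inj_on f Y"
    and "entourage W"
  obtains i0 where "\<And>i w w'. i0 \<le> i \<Longrightarrow> w \<in> Z i \<Longrightarrow> w' \<in> Z i \<Longrightarrow> f w = f w' \<Longrightarrow> (w, w') \<in> W"
proof -
  obtain E where E: "entourage E" "\<And>a b. (a, b) \<in> E \<Longrightarrow> (b, a) \<in> E"
    "\<And>a b c d. (a, b) \<in> E \<Longrightarrow> (b, c) \<in> E \<Longrightarrow> (c, d) \<in> E \<Longrightarrow> (a, d) \<in> W"
    by (fact entourage_cube_root[OF \<open>entourage W\<close>])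
  have "continuous_on Y f"
    using uniformly_continuous_imp_continuous[OF assms(4)] continuous_on_subset by blast
  then obtain T where T: "entourage T" "\<forall>y\<in>Y. \<forall>y'\<in>Y. (f y, f y') \<in> T \<longrightarrow> (y, y') \<in> E"
    using inj_on_compact_imp_uniformly_injective[OF sep \<open>compact Y\<close>, of f] \<open>inj_on f Y\<close> E(1) by blast
  obtain T' where T': "entourage T'" "\<And>a b. (a, b) \<in> T' \<Longrightarrow> (b, a) \<in> T'"
    "\<And>a b c d. (a, b) \<in> T' \<Longrightarrow> (b, c) \<in> T' \<Longrightarrow> (c, d) \<in> T' \<Longrightarrow> (a, d) \<in> T"
    by (fact entourage_cube_root[OF T(1)])
  obtain U where U: "entourage U" "\<And>a b. (a, b) \<in> U \<Longrightarrow> (f a, f b) \<in> T'"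
    by (fact uniformly_continuous_entourage[OF assms(4) T'(1)])
  obtain i0 where i0: "\<And>i y. i0 \<le> i \<Longrightarrow> y \<in> Y \<Longrightarrow> \<exists>z\<in>Z i. (y, z) \<in> U \<inter> E"
    "\<And>i z. i0 \<le> i \<Longrightarrow> z \<in> Z i \<Longrightarrow> \<exists>y\<in>Y. (z, y) \<in> U \<inter> E"
    by (fact hb_net_convergesE[OF assms(3) entourage_Int[OF U(1) E(1)]])
  have "(w, w') \<in> W" if ww': "i0 \<le> i" "w \<in> Z i" "w' \<in> Z i" "f w = f w'" for i w w'
  proof -
    obtain y where y: "y \<in> Y" "(w, y) \<in> U" "(w, y) \<in> E" using i0(2)[OF ww'(1,2)] by blast
    obtain y' where y': "y' \<in> Y" "(w', y') \<in> U" "(w', y') \<in> E" using i0(2)[OF ww'(1,3)] by blast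
    have "(f y, f w) \<in> T'" "(f w, f y') \<in> T'"
      using U(2)[OF y(2)] U(2)[OF y'(2)] T'(2) \<open>f w = f w'\<close> by auto
    then have "(f y, f y') \<in> T" using T'(3) entourage_refl[OF T'(1)] by blast
    then have "(y, y') \<in> E" using T(2) y(1) y'(1) by blast
    then show ?thesis using E(3)[OF y(3) _ E(2)[OF y'(3)]] by blast
  qed
  then show thesis using that by blast
qed

lemma hb_limit_surjective:
  fixes Z :: "'i::preorder \<Rightarrow> 'a::uniform_space set" and f :: "'a \<Rightarrow> 'a"
  assumes sep: "separated_uniformity TYPE('a)"
    and "compact Y" "hb_net_converges Z Y" "directed_type TYPE('i)"
    and "uniformly_continuous_on UNIV f"
    and surj: "\<And>i. i0 \<le> i \<Longrightarrow> f ` Z i = Z i"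
  shows "Y \<subseteq> f ` Y"
proof
  fix y assume "y \<in> Y"
  have "continuous_on Y f"
    using uniformly_continuous_imp_continuous[OF assms(5)] continuous_on_subset by blast
  then have "compact (f ` Y)" using \<open>compact Y\<close> by (rule compact_continuous_image)
  then show "y \<in> f ` Y"
  proof (rule mem_compact_if_entourage_close[OF sep])
    fix V :: "('a \<times> 'a) set" assume "entourage V"
    obtain E where E: "entourage E" "\<And>a b. (a, b) \<in> E \<Longrightarrow> (b, a) \<in> E"
      "\<And>a b c d. (a, b) \<in> E \<Longrightarrow> (b, c) \<in> E \<Longrightarrow> (c, d) \<in> E \<Longrightarrow> (a, d) \<in> V"
      by (fact entourage_cube_root[OF \<open>entourage V\<close>])
    obtain U where U: "entourage U" "\<And>a b. (a, b) \<in> U \<Longrightarrow> (f a, f b) \<in> E"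
      by (fact uniformly_continuous_entourage[OF assms(5) E(1)])
    obtain i1 where i1: "\<And>i y. i1 \<le> i \<Longrightarrow> y \<in> Y \<Longrightarrow> \<exists>z\<in>Z i. (y, z) \<in> U \<inter> E"
      "\<And>i z. i1 \<le> i \<Longrightarrow> z \<in> Z i \<Longrightarrow> \<exists>y\<in>Y. (z, y) \<in> U \<inter> E"
      by (fact hb_net_convergesE[OF assms(3) entourage_Int[OF U(1) E(1)]])
    obtain i where "i0 \<le> i" "i1 \<le> i" using assms(4) unfolding directed_type_def by blast
    obtain z where "z \<in> Z i" "(y, z) \<in> E" using i1(1)[OF \<open>i1 \<le> i\<close> \<open>y \<in> Y\<close>] by blast
    then obtain w where "w \<in> Z i" "z = f w" using surj[OF \<open>i0 \<le> i\<close>] by blast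
    then obtain y' where "y' \<in> Y" "(w, y') \<in> U" using i1(2)[OF \<open>i1 \<le> i\<close>] by blast
    have "(y, f y') \<in> V"
      using E(3)[OF \<open>(y, z) \<in> E\<close> _ entourage_refl[OF E(1)]] U(2)[OF \<open>(w, y') \<in> U\<close>] \<open>z = f w\<close>
      by blast
    then show "\<exists>a\<in>f ` Y. (y, a) \<in> V" using \<open>y' \<in> Y\<close> by blast
  qed
qed

theorem theorem1p1:
  fixes act :: "'g::group_add \<Rightarrow> 'a::uniform_space \<Rightarrow> 'a"
    and f :: "'a \<Rightarrow> 'a"
    and Y :: "'a set"
    and Z :: "'i::preorder \<Rightarrow> 'a set"
  assumes "group_action act"
    and "\<forall>g. uniformly_continuous_on UNIV (act g)"
    and "expansive_action act"
    and "uniformly_continuous_on UNIV f"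
    and "equivariant act f"
    and "compact Y"
    and "directed_type TYPE('i)"
    and "\<forall>i. invariant_set act (Z i)"
    and "hb_net_converges Z Y"
    and "\<forall>i. f ` (Z i) \<subseteq> Z i"
    and "\<forall>i. surjunctive_on (Z i) f"
  shows "invariant_set act Y \<and> f ` Y \<subseteq> Y \<and> surjunctive_on Y f"
proof -
  have sep: "separated_uniformity TYPE('a)"
    using expansive_action_imp_separated[OF assms(3,2)] by blast
  have "act g ` Y \<subseteq> Y" for g
    using hb_limit_maps_into[OF sep assms(6,9)] assms(2,8) unfolding invariant_set_def by blast
  then have "invariant_set act Y" unfolding invariant_set_def by blast
  moreover have "f ` Y \<subseteq> Y"
    using hb_limit_maps_into[OF sep assms(6,9,4)] assms(10) by blast
  moreover have "f ` Y = Y" if inj: "inj_on f Y"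
  proof -
    obtain W0 where W0: "entourage W0" "\<forall>x y. x \<noteq> y \<longrightarrow> (\<exists>g. (act g x, act g y) \<notin> W0)"
      using assms(3) unfolding expansive_action_def by blast
    obtain i0 where "\<And>i w w'. i0 \<le> i \<Longrightarrow> w \<in> Z i \<Longrightarrow> w' \<in> Z i \<Longrightarrow> f w = f w' \<Longrightarrow> (w, w') \<in> W0"
      by (fact hb_limit_eventually_uniformly_injective[OF sep assms(6,9,4) inj W0(1)])
    then have "inj_on f (Z i)" if "i0 \<le> i" for i
      using expansive_action_inj_on_invariant[OF W0(2) assms(5)] assms(8) that by blast
    then have "f ` Z i = Z i" if "i0 \<le> i" for i
      using assms(11) that unfolding surjunctive_on_def by blast
    then show ?thesis
      using hb_limit_surjective[OF sep assms(6,9,7,4)] \<open>f ` Y \<subseteq> Y\<close> by blast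
  qed
  ultimately show ?thesis unfolding surjunctive_on_def by blast
qed

end
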